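(* Let $c>0$ and $0<q_1<q_2\le 1$, and set $$\rho_1=\frac{\sin\frac{q_1\pi}{2}}{\sin\frac{(q_2-q_1)\pi}{2}},\qquad \rho_2=\frac{\sin\frac{q_2\pi}{2}}{\sin\frac{(q_2-q_1)\pi}{2}}.$$ Then $\rho_1>0$ and $\rho_2>1$. Consider the smooth parametric curve $\Gamma_{c,q_1,q_2}$ in the $(b,a)$-plane given by $$b(\omega)=\rho_1\omega^{q_2}-c\rho_2\omega^{-q_1},\qquad a(\omega)=c\rho_1\omega^{-q_2}-\rho_2\omega^{q_1},\qquad \omega>0.$$ Then $\Gamma_{c,q_1,q_2}$ is the graph of a smooth, decreasing, convex bijective function $a^\star=a^\star_{c,q_1,q_2}:\mathbb{R}\to\mathbb{R}$ (i.e. $a=a^\star(b)$), which satisfies $$a^\star(b)\le (-b)^{q_2/q_1}\,c^{\,1-q_2/q_1}\ \text{ if } b<0,\qquad a^\star(b)\le -b^{q_1/q_2}\ \text{ if } b\ge 0.$$ *)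

theory Defs
  imports "HOL-Analysis.Analysis"
begin

definition smooth_real :: "(real \<Rightarrow> real) \<Rightarrow> bool" where
  "smooth_real f \<longleftrightarrow> (\<forall>n. ((deriv ^^ n) f) differentiable_on UNIV)"

definition rho1 :: "real \<Rightarrow> real \<Rightarrow> real" where
  "rho1 q1 q2 = sin (q1 * pi / 2) / sin ((q2 - q1) * pi / 2)"

definition rho2 :: "real \<Rightarrow> real \<Rightarrow> real" where
  "rho2 q1 q2 = sin (q2 * pi / 2) / sin ((q2 - q1) * pi / 2)"

definition curve_b :: "real \<Rightarrow> real \<Rightarrow> real \<Rightarrow> real \<Rightarrow> real" where
  "curve_b c q1 q2 \<omega> = rho1 q1 q2 * \<omega> powr q2 - c * rho2 q1 q2 * \<omega> powr (- q1)"

definition curve_a :: "real \<Rightarrow> real \<Rightarrow> real \<Rightarrow> real \<Rightarrow> real" where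
  "curve_a c q1 q2 \<omega> = c * rho1 q1 q2 * \<omega> powr (- q2) - rho2 q1 q2 * \<omega> powr q1"

end

theory Submission
  imports Defs
begin

text \<open>The function b(omega) is a positive power minus a negative power with positive
coefficients, hence a strictly increasing bijection of (0, infinity) onto the reals, so the
curve is the graph of a* = a o b^-1. Every derivative of a* is again g o b^-1 for some g built
from real powers by the field operations, which makes a* smooth, and a*' = (a'/b') o b^-1 with
a'/b' increasing in omega, which makes a* convex. For the bounds put e = omega^(q1+q2)/c: up to
the positive factors c omega^-q1 and c omega^-q2, the point (b, a) is (rho1 e - rho2, rho1 - rho2 e),
and both bounds reduce to the tangent-line inequality x^r <= r x + 1 - r for r = q1/q2, together
with rho2 q1/q2 <= rho1 and rho2 (1 - q1/q2) <= rho2^2 - rho1^2, two consequences of the concavity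
of sin on [0, pi].\<close>

lemma mult_sin_le_sin_mult:
  fixes t y :: real
  assumes "0 \<le> t" "t \<le> 1" "0 \<le> y" "y \<le> pi"
  shows "t * sin y \<le> sin (t * y)"
proof -
  have "convex_on {0..pi} (\<lambda>x. - sin x)"
  proof (rule convex_on_realI[where f'="\<lambda>x. - cos x"])
    show "((\<lambda>x. - sin x) has_real_derivative - cos x) (at x)" for x :: real
      by (auto intro!: derivative_eq_intros)
    show "- cos x \<le> - cos y" if "x \<in> {0..pi}" "y \<in> {0..pi}" "x \<le> y" for x y :: real
      using that by (auto simp: cos_mono_le_eq)
  qed auto
  then have "- sin ((1 - t) *\<^sub>R 0 + t *\<^sub>R y) \<le> (1 - t) * (- sin 0) + t * (- sin y)"
    using assms by (intro convex_onD) auto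
  then show ?thesis by simp
qed

lemma sin_sq_diff_ge:
  fixes \<alpha> \<beta> :: real
  assumes "0 < \<alpha>" "\<alpha> < \<beta>" "\<beta> \<le> pi / 2"
  shows "sin (\<beta> - \<alpha>) * (sin \<beta> * (1 - \<alpha> / \<beta>)) \<le> (sin \<beta>)\<^sup>2 - (sin \<alpha>)\<^sup>2"
proof -
  have "(1 - 2 * \<alpha> / pi) * sin (pi / 2) \<le> sin ((1 - 2 * \<alpha> / pi) * (pi / 2))"
    using assms by (intro mult_sin_le_sin_mult) (auto simp: field_simps)
  also have "(1 - 2 * \<alpha> / pi) * (pi / 2) = pi / 2 - \<alpha>"
    by (simp add: field_simps)
  finally have "1 - 2 * \<alpha> / pi \<le> cos \<alpha>"
    by (simp add: sin_cos_eq)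
  moreover have "1 - \<alpha> / \<beta> \<le> 1 - 2 * \<alpha> / pi"
    using assms by (simp add: field_simps)
  moreover have "0 < sin \<beta>" "0 \<le> cos \<beta>" "0 < sin \<alpha>"
    using assms by (auto intro!: sin_gt_zero cos_ge_zero)
  ultimately have "sin \<beta> * (1 - \<alpha> / \<beta>) \<le> sin \<beta> * cos \<alpha> + cos \<beta> * sin \<alpha>"
    by (simp add: add_increasing2 mult_left_mono)
  also have "\<dots> = sin (\<beta> + \<alpha>)"
    by (simp add: sin_add)
  finally have "sin (\<beta> - \<alpha>) * (sin \<beta> * (1 - \<alpha> / \<beta>)) \<le> sin (\<beta> - \<alpha>) * sin (\<beta> + \<alpha>)"
    using assms by (intro mult_left_mono sin_ge_zero) auto
  also have "\<dots> = (sin \<beta> * cos \<alpha>)\<^sup>2 - (cos \<beta> * sin \<alpha>)\<^sup>2"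
    by (simp add: sin_add sin_diff power2_eq_square algebra_simps)
  also have "\<dots> = (sin \<beta>)\<^sup>2 - (sin \<alpha>)\<^sup>2"
    by (simp add: power_mult_distrib cos_squared_eq algebra_simps)
  finally show ?thesis .
qed

lemma sin_angle_facts:
  fixes \<alpha> \<beta> :: real
  assumes "0 < \<alpha>" "\<alpha> < \<beta>" "\<beta> \<le> pi / 2"
  shows "0 < sin (\<beta> - \<alpha>)" "0 < sin \<alpha>" "sin (\<beta> - \<alpha>) < sin \<beta>"
  using assms by (auto intro!: sin_gt_zero simp: sin_mono_less_eq)

lemma rho_sin_eq:
  "rho1 q1 q2 = sin (q1 * pi / 2) / sin (q2 * pi / 2 - q1 * pi / 2)"
  "rho2 q1 q2 = sin (q2 * pi / 2) / sin (q2 * pi / 2 - q1 * pi / 2)"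
  by (simp_all add: rho1_def rho2_def left_diff_distrib diff_divide_distrib)

context
  fixes q1 q2 :: real
  assumes q1_pos: "0 < q1" and q1_less_q2: "q1 < q2" and q2_le_1: "q2 \<le> 1"
begin

private lemma angles: "0 < q1 * pi / 2" "q1 * pi / 2 < q2 * pi / 2" "q2 * pi / 2 \<le> pi / 2"
  using q1_pos q1_less_q2 q2_le_1 by (auto simp: divide_simps)

private lemmas sin_facts = sin_angle_facts[OF angles]

lemma rho1_pos: "0 < rho1 q1 q2"
  using sin_facts by (simp add: rho_sin_eq)

lemma rho2_gt_one: "1 < rho2 q1 q2"
  using sin_facts by (simp add: rho_sin_eq)

lemma rho2_mult_ratio_le_rho1: "rho2 q1 q2 * (q1 / q2) \<le> rho1 q1 q2"
proof -
  have "(q1 / q2) * sin (q2 * pi / 2) \<le> sin ((q1 / q2) * (q2 * pi / 2))"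
    using angles q1_pos q1_less_q2 by (intro mult_sin_le_sin_mult) auto
  then have "(q1 / q2) * sin (q2 * pi / 2) / sin (q2 * pi / 2 - q1 * pi / 2)
      \<le> sin (q1 * pi / 2) / sin (q2 * pi / 2 - q1 * pi / 2)"
    using sin_facts q1_pos q1_less_q2 by (intro divide_right_mono) auto
  then show ?thesis
    by (simp add: rho_sin_eq mult.commute)
qed

lemma rho2_mult_ratio_compl_le: "rho2 q1 q2 * (1 - q1 / q2) \<le> (rho2 q1 q2)\<^sup>2 - (rho1 q1 q2)\<^sup>2"
proof -
  let ?s = "sin (q2 * pi / 2 - q1 * pi / 2)"
  have "?s * (sin (q2 * pi / 2) * (1 - (q1 * pi / 2) / (q2 * pi / 2)))
      \<le> (sin (q2 * pi / 2))\<^sup>2 - (sin (q1 * pi / 2))\<^sup>2"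
    using angles by (rule sin_sq_diff_ge)
  then have "?s * (sin (q2 * pi / 2) * (1 - q1 / q2)) / ?s\<^sup>2
      \<le> ((sin (q2 * pi / 2))\<^sup>2 - (sin (q1 * pi / 2))\<^sup>2) / ?s\<^sup>2"
    by (intro divide_right_mono) auto
  then show ?thesis
    using sin_facts by (simp add: rho_sin_eq power_divide diff_divide_distrib power2_eq_square)
qed

end

lemma powr_le_tangent_line:
  fixes x r :: real
  assumes "0 \<le> x" "0 \<le> r" "r \<le> 1"
  shows "x powr r \<le> r * x + (1 - r)"
proof (cases "x = 0")
  case False
  then have "x powr r * 1 powr (1 - r) \<le> r * x + (1 - r) * 1"
    using assms by (intro Youngs_inequality_0) auto
  then show ?thesis by simp
qed (use assms in simp)

context
  fixes r1 r2 r :: real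
  assumes r1_pos: "0 < r1" and r2_pos: "0 < r2" and r_pos: "0 < r" and r_le_1: "r \<le> 1"
    and ratio_le: "r2 * r \<le> r1" and compl_ratio_le: "r2 * (1 - r) \<le> r2\<^sup>2 - r1\<^sup>2"
begin

private lemma tangent_line_bound:
  assumes "0 \<le> x"
  shows "r2 * x powr r \<le> r1 * x + (r2\<^sup>2 - r1\<^sup>2)"
proof -
  have "r2 * x powr r \<le> r2 * (r * x + (1 - r))"
    using powr_le_tangent_line[OF assms] r_pos r_le_1 r2_pos by (intro mult_left_mono) auto
  also have "\<dots> = (r2 * r) * x + r2 * (1 - r)"
    by (simp add: algebra_simps)
  also have "\<dots> \<le> r1 * x + (r2\<^sup>2 - r1\<^sup>2)"
    using ratio_le compl_ratio_le assms by (intro add_mono mult_right_mono) auto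
  finally show ?thesis .
qed

lemma normalized_bound_neg:
  assumes "0 < r2 - r1 * e"
  shows "r1 - r2 * e \<le> (r2 - r1 * e) powr (1 / r)"
proof -
  let ?f = "(r2 - r1 * e) powr (1 / r)"
  have "r2 * (r2 - r1 * e) \<le> r1 * ?f + (r2\<^sup>2 - r1\<^sup>2)"
    using tangent_line_bound[of ?f] assms r_pos by (simp add: powr_powr)
  then have "r1 * (r1 - r2 * e) \<le> r1 * ?f"
    by (simp add: power2_eq_square algebra_simps)
  then show ?thesis
    using r1_pos by simp
qed

lemma normalized_bound_nonneg:
  assumes "0 \<le> r1 - r2 * e"
  shows "(r1 - r2 * e) powr r \<le> r2 - r1 * e"
proof -
  have "r2 * (r1 - r2 * e) powr r \<le> r2 * (r2 - r1 * e)"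
    using tangent_line_bound[OF assms] by (simp add: power2_eq_square algebra_simps)
  then show ?thesis
    using r2_pos by simp
qed

end

context
  fixes P Q \<alpha> \<beta> :: real
  assumes P_pos: "0 < P" and Q_pos: "0 < Q" and \<alpha>_pos: "0 < \<alpha>" and \<beta>_pos: "0 < \<beta>"
begin

lemma has_real_derivative_powr_sub_powr:
  assumes "0 < w"
  shows "((\<lambda>w. P * w powr \<alpha> - Q * w powr (- \<beta>)) has_real_derivative
     P * \<alpha> * w powr (\<alpha> - 1) + Q * \<beta> * w powr (- \<beta> - 1)) (at w)"
  using assms by (auto intro!: derivative_eq_intros)

lemma strict_mono_on_powr_sub_powr:
  "strict_mono_on {0<..} (\<lambda>w. P * w powr \<alpha> - Q * w powr (- \<beta>))"
proof (rule strict_mono_onI)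
  fix x y :: real
  assume "x \<in> {0<..}" "x < y"
  then have "P * x powr \<alpha> < P * y powr \<alpha>" "Q * y powr (- \<beta>) < Q * x powr (- \<beta>)"
    using \<alpha>_pos \<beta>_pos P_pos Q_pos by (auto intro: powr_less_mono2 powr_less_mono2_neg)
  then show "P * x powr \<alpha> - Q * x powr (- \<beta>) < P * y powr \<alpha> - Q * y powr (- \<beta>)"
    by linarith
qed

lemma powr_sub_powr_surj:
  "(\<lambda>w. P * w powr \<alpha> - Q * w powr (- \<beta>)) ` {0<..} = UNIV"
proof -
  let ?g = "\<lambda>w::real. P * w powr \<alpha> - Q * w powr (- \<beta>)"
  have "y \<in> ?g ` {0<..}" for y
  proof -
    define w1 where "w1 = ((\<bar>y\<bar> + P) / Q + 1) powr (- 1 / \<beta>)"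
    define w2 where "w2 = ((\<bar>y\<bar> + Q) / P + 1) powr (1 / \<alpha>)"
    have B: "1 \<le> (\<bar>y\<bar> + P) / Q + 1" "1 \<le> (\<bar>y\<bar> + Q) / P + 1"
      using P_pos Q_pos by (simp_all add: add_pos_nonneg)
    have w1: "0 < w1" "w1 \<le> 1" "Q * w1 powr (- \<beta>) = \<bar>y\<bar> + P + Q"
      unfolding w1_def using B P_pos Q_pos \<beta>_pos
        powr_mono2'[of "- 1 / \<beta>" 1 "(\<bar>y\<bar> + P) / Q + 1"]
      by (simp_all add: powr_powr field_simps)
    have w2: "1 \<le> w2" "P * w2 powr \<alpha> = \<bar>y\<bar> + Q + P"
      unfolding w2_def using B P_pos Q_pos \<alpha>_pos
      by (simp_all add: powr_powr ge_one_powr_ge_zero field_simps)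
    have "1 \<le> w2 powr \<beta>"
      using w2 \<beta>_pos by (intro ge_one_powr_ge_zero) auto
    then have "w2 powr (- \<beta>) \<le> 1" "w1 powr \<alpha> \<le> 1"
      using w1 \<alpha>_pos by (simp_all add: powr_minus powr_le1 inverse_le_1_iff)
    then have "P * w1 powr \<alpha> \<le> P" "Q * w2 powr (- \<beta>) \<le> Q"
      using P_pos Q_pos by (simp_all add: mult_left_le)
    then have "?g w1 \<le> y \<and> y \<le> ?g w2"
      using w1 w2 P_pos Q_pos abs_ge_self[of y] abs_ge_minus_self[of y] by linarith
    moreover have "continuous_on {w1..w2} ?g"
      using w1 by (intro continuous_at_imp_continuous_on ballI
          DERIV_isCont[OF has_real_derivative_powr_sub_powr]) auto
    ultimately obtain w where "w1 \<le> w" "w \<le> w2" "?g w = y"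
      using IVT'[of ?g w1 y w2] w1(2) w2(1) by auto
    then show ?thesis
      using w1 by (intro image_eqI[of _ _ w]) auto
  qed
  then show ?thesis by auto
qed

end

inductive powr_rational :: "(real \<Rightarrow> real) \<Rightarrow> bool" where
  const: "powr_rational (\<lambda>x. k)"
| powr: "powr_rational (\<lambda>x. x powr p)"
| add: "powr_rational f \<Longrightarrow> powr_rational g \<Longrightarrow> powr_rational (\<lambda>x. f x + g x)"
| mult: "powr_rational f \<Longrightarrow> powr_rational g \<Longrightarrow> powr_rational (\<lambda>x. f x * g x)"
| inverse: "powr_rational f \<Longrightarrow> (\<forall>x>0. f x \<noteq> 0) \<Longrightarrow> powr_rational (\<lambda>x. inverse (f x))"

lemma powr_rational_has_derivative:
  assumes "powr_rational f"
  shows "\<exists>f'. powr_rational f' \<and> (\<forall>x>0. (f has_real_derivative f' x) (at x))"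
  using assms
proof (induction rule: powr_rational.induct)
  case (const k)
  show ?case
    by (intro exI[of _ "\<lambda>x. 0"]) (auto intro: powr_rational.intros)
next
  case (powr p)
  show ?case
    by (intro exI[of _ "\<lambda>x. p * x powr (p - 1)"])
      (auto intro: powr_rational.intros has_real_derivative_powr)
next
  case (add f g)
  then obtain f' g' where "powr_rational f'" "\<forall>x>0. (f has_real_derivative f' x) (at x)"
    and "powr_rational g'" "\<forall>x>0. (g has_real_derivative g' x) (at x)"
    by blast
  then show ?case
    by (intro exI[of _ "\<lambda>x. f' x + g' x"]) (auto intro: powr_rational.intros DERIV_add)
next
  case (mult f g)
  then obtain f' g' where "powr_rational f'" "\<forall>x>0. (f has_real_derivative f' x) (at x)"
    and "powr_rational g'" "\<forall>x>0. (g has_real_derivative g' x) (at x)"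
    by blast
  with mult.hyps show ?case
    by (intro exI[of _ "\<lambda>x. f' x * g x + g' x * f x"]) (auto intro: powr_rational.intros DERIV_mult)
next
  case (inverse f)
  then obtain f' where f': "powr_rational f'" "\<forall>x>0. (f has_real_derivative f' x) (at x)"
    by blast
  have "powr_rational (\<lambda>x. (- 1) * f' x * (inverse (f x) * inverse (f x)))"
    using f'(1) inverse.hyps by (intro powr_rational.intros) auto
  moreover have "((\<lambda>x. inverse (f x)) has_real_derivative
      (- 1) * f' x * (inverse (f x) * inverse (f x))) (at x)" if "0 < x" for x
    using DERIV_inverse_fun[of f "f' x" x] f'(2) inverse.hyps that
    by (simp add: power2_eq_square inverse_mult_distrib)
  ultimately show ?case
    by blast
qed

lemma powr_rational_diff:
  assumes "powr_rational f" "powr_rational g"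
  shows "powr_rational (\<lambda>x. f x - g x)"
proof -
  have "powr_rational (\<lambda>x. f x + (- 1) * g x)"
    using assms by (intro powr_rational.intros)
  then show ?thesis
    by simp
qed

lemma inv_into_pos_has_real_derivative:
  fixes f f' :: "real \<Rightarrow> real"
  assumes bij: "bij_betw f {0<..} UNIV"
    and deriv: "\<And>w. 0 < w \<Longrightarrow> (f has_real_derivative f' w) (at w)"
    and nonzero: "\<And>w. 0 < w \<Longrightarrow> f' w \<noteq> 0"
  shows "(inv_into {0<..} f has_real_derivative inverse (f' (inv_into {0<..} f x))) (at x)"
proof -
  let ?g = "inv_into {0<..} f"
  have surj: "f ` {0<..} = UNIV" and inj: "inj_on f {0<..}"
    using bij by (simp_all add: bij_betw_def)
  have g_pos: "0 < ?g y" for y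
    using inv_into_into[of y f "{0<..}"] surj by simp
  have f_g: "f (?g y) = y" for y
    using f_inv_into_f[of y f "{0<..}"] surj by simp
  have g_f: "?g (f z) = z" if "0 < z" for z
    using inv_into_f_f[OF inj] that by simp
  have "isCont ?g (f (?g x))"
  proof (rule isCont_inverse_function2[where f = f and a = "?g x / 2" and b = "2 * ?g x"])
    show "?g x / 2 < ?g x" "?g x < 2 * ?g x"
      using g_pos[of x] by simp_all
    show "?g (f z) = z" "isCont f z" if "?g x / 2 \<le> z" "z \<le> 2 * ?g x" for z
      using g_f DERIV_isCont[OF deriv] g_pos[of x] that by simp_all
  qed
  then have "isCont ?g x"
    by (simp add: f_g)
  then show ?thesis
    using g_pos[of x] f_g deriv nonzero
    by (intro DERIV_inverse_function[where a = "x - 1" and b = "x + 1"]) simp_all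
qed

context
  fixes h d :: "real \<Rightarrow> real"
  assumes h_pos: "\<And>x. 0 < h x"
    and h_deriv: "\<And>x. (h has_real_derivative inverse (d (h x))) (at x)"
begin

private lemma comp_has_real_derivative:
  assumes "\<And>w. 0 < w \<Longrightarrow> (g has_real_derivative g' w) (at w)"
  shows "((\<lambda>x. g (h x)) has_real_derivative g' (h x) * inverse (d (h x))) (at x)"
  by (rule DERIV_chain2[OF assms[OF h_pos] h_deriv])

lemma smooth_real_comp_inverse:
  assumes "powr_rational g" and "powr_rational d" and d_nonzero: "\<And>w. 0 < w \<Longrightarrow> d w \<noteq> 0"
  shows "smooth_real (\<lambda>x. g (h x))"
proof -
  have "\<exists>f. powr_rational f \<and> (deriv ^^ n) (\<lambda>x. g (h x)) = (\<lambda>x. f (h x))" for n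
  proof (induction n)
    case 0
    show ?case
      using assms(1) by auto
  next
    case (Suc n)
    then obtain f where f: "powr_rational f" "(deriv ^^ n) (\<lambda>x. g (h x)) = (\<lambda>x. f (h x))"
      by blast
    obtain f' where f': "powr_rational f'" "\<forall>w>0. (f has_real_derivative f' w) (at w)"
      using powr_rational_has_derivative[OF f(1)] by blast
    have "(deriv ^^ Suc n) (\<lambda>x. g (h x)) = (\<lambda>x. f' (h x) * inverse (d (h x)))"
      using f(2) f'(2) by (auto intro!: DERIV_imp_deriv comp_has_real_derivative)
    moreover have "powr_rational (\<lambda>w. f' w * inverse (d w))"
      using f'(1) assms(2) d_nonzero by (intro powr_rational.intros) auto
    ultimately show ?case
      by blast
  qed
  moreover have "(\<lambda>x. f (h x)) differentiable_on UNIV" if f: "powr_rational f" for f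
  proof -
    obtain f' where "\<forall>w>0. (f has_real_derivative f' w) (at w)"
      using powr_rational_has_derivative[OF f] by blast
    then have "(\<lambda>x. f (h x)) differentiable at x" for x
      using comp_has_real_derivative real_differentiable_def by blast
    then show ?thesis
      by (simp add: differentiable_at_imp_differentiable_on)
  qed
  ultimately show ?thesis
    unfolding smooth_real_def by (metis (no_types))
qed

lemma convex_on_comp_inverse:
  assumes "mono h"
    and g_deriv: "\<And>w. 0 < w \<Longrightarrow> (g has_real_derivative g' w) (at w)"
    and slope_mono: "\<And>s t. 0 < s \<Longrightarrow> s \<le> t \<Longrightarrow> g' s / d s \<le> g' t / d t"
  shows "convex_on UNIV (\<lambda>x. g (h x))"
proof (rule convex_on_realI[where f' = "\<lambda>x. g' (h x) / d (h x)"])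
  show "((\<lambda>x. g (h x)) has_real_derivative g' (h x) / d (h x)) (at x)" for x
    using comp_has_real_derivative[OF g_deriv] by (simp add: divide_inverse)
  show "g' (h x) / d (h x) \<le> g' (h y) / d (h y)" if "x \<le> y" for x y
    using slope_mono h_pos \<open>mono h\<close> that by (simp add: monoD)
qed auto

end

lemma linear_fractional_antimono:
  fixes a b c d z1 z2 :: real
  assumes "0 < c" "0 < d" "b * d \<le> a * c" "0 \<le> z1" "z1 \<le> z2"
  shows "(a + b * z2) / (c * z2 + d) \<le> (a + b * z1) / (c * z1 + d)"
proof -
  have "0 < c * z1 + d" "0 < c * z2 + d"
    using assms by (simp_all add: add_nonneg_pos)
  moreover have "0 \<le> (z2 - z1) * (a * c - b * d)"
    using assms by simp
  then have "(a + b * z2) * (c * z1 + d) \<le> (a + b * z1) * (c * z2 + d)"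
    by (simp add: algebra_simps)
  ultimately show ?thesis
    by (simp add: frac_le_eq divide_nonpos_pos)
qed

locale gamma_curve =
  fixes c q1 q2 :: real
  assumes c_pos: "0 < c" and q1_pos: "0 < q1" and q1_less_q2: "q1 < q2" and q2_le_1: "q2 \<le> 1"
begin

abbreviation "r1 \<equiv> rho1 q1 q2"
abbreviation "r2 \<equiv> rho2 q1 q2"

lemma r1_pos: "0 < r1" and r2_pos: "0 < r2"
  using rho1_pos rho2_gt_one q1_pos q1_less_q2 q2_le_1 by force+

lemma q2_pos: "0 < q2"
  using q1_pos q1_less_q2 by simp

definition b_deriv :: "real \<Rightarrow> real" where
  "b_deriv w = r1 * q2 * w powr (q2 - 1) + c * r2 * q1 * w powr (- q1 - 1)"

definition a_deriv :: "real \<Rightarrow> real" where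
  "a_deriv w = - (r2 * q1 * w powr (q1 - 1) + c * r1 * q2 * w powr (- q2 - 1))"

lemma curve_b_eq: "curve_b c q1 q2 = (\<lambda>w. r1 * w powr q2 - (c * r2) * w powr (- q1))"
  by (simp add: curve_b_def fun_eq_iff)

lemma curve_a_eq: "curve_a c q1 q2 = (\<lambda>w. - (r2 * w powr q1 - (c * r1) * w powr (- q2)))"
  by (simp add: curve_a_def fun_eq_iff)

lemma curve_b_has_real_derivative:
  "0 < w \<Longrightarrow> (curve_b c q1 q2 has_real_derivative b_deriv w) (at w)"
  using has_real_derivative_powr_sub_powr[of r1 "c * r2" q2 q1 w] r1_pos r2_pos c_pos q1_pos q2_pos
  by (simp add: curve_b_eq b_deriv_def mult.assoc)

lemma curve_a_has_real_derivative:
  "0 < w \<Longrightarrow> (curve_a c q1 q2 has_real_derivative a_deriv w) (at w)"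
  using DERIV_minus[OF has_real_derivative_powr_sub_powr[of r2 "c * r1" q1 q2 w]]
    r1_pos r2_pos c_pos q1_pos q2_pos
  by (simp add: curve_a_eq a_deriv_def mult.assoc)

lemma b_deriv_pos: "0 < w \<Longrightarrow> 0 < b_deriv w"
  unfolding b_deriv_def using r1_pos r2_pos c_pos q1_pos q2_pos by (intro add_pos_pos) auto

lemma strict_mono_on_curve_b: "strict_mono_on {0<..} (curve_b c q1 q2)"
  unfolding curve_b_eq
  using r1_pos r2_pos c_pos q1_pos q2_pos by (intro strict_mono_on_powr_sub_powr) auto

lemma bij_betw_curve_b: "bij_betw (curve_b c q1 q2) {0<..} UNIV"
  unfolding bij_betw_def
  using strict_mono_on_curve_b powr_sub_powr_surj[of r1 "c * r2" q2 q1]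
    r1_pos r2_pos c_pos q1_pos q2_pos
  by (auto intro: strict_mono_on_imp_inj_on simp: curve_b_eq)

lemma curve_a_strict_antimono: "0 < s \<Longrightarrow> s < t \<Longrightarrow> curve_a c q1 q2 t < curve_a c q1 q2 s"
  using strict_mono_onD[OF strict_mono_on_powr_sub_powr[of r2 "c * r1" q1 q2], of s t]
    r1_pos r2_pos c_pos q1_pos q2_pos
  by (simp add: curve_a_eq)

lemma curve_a_surj: "curve_a c q1 q2 ` {0<..} = UNIV"
proof -
  have "uminus ` (\<lambda>w. r2 * w powr q1 - (c * r1) * w powr (- q2)) ` {0<..} = (UNIV :: real set)"
    using powr_sub_powr_surj[of r2 "c * r1" q1 q2] r1_pos r2_pos c_pos q1_pos q2_pos
    by (simp add: surj_def)
  then show ?thesis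
    by (simp add: curve_a_eq image_image)
qed

definition param :: "real \<Rightarrow> real" where
  "param = inv_into {0<..} (curve_b c q1 q2)"

lemma param_pos: "0 < param x"
  using bij_betw_curve_b bij_betw_inv_into bij_betwE unfolding param_def by blast

lemma curve_b_param: "curve_b c q1 q2 (param x) = x"
  using bij_betw_curve_b unfolding param_def by (simp add: bij_betw_inv_into_right)

lemma param_curve_b: "0 < w \<Longrightarrow> param (curve_b c q1 q2 w) = w"
  using bij_betw_curve_b unfolding param_def by (simp add: bij_betw_inv_into_left)

lemma param_has_real_derivative: "(param has_real_derivative inverse (b_deriv (param x))) (at x)"
  unfolding param_def
  using bij_betw_curve_b curve_b_has_real_derivative b_deriv_pos
  by (intro inv_into_pos_has_real_derivative) (auto simp: less_imp_neq[symmetric])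

lemma strict_mono_param: "strict_mono param"
proof (rule strict_monoI)
  fix x y :: real
  assume "x < y"
  show "param x < param y"
  proof (rule ccontr)
    assume "\<not> param x < param y"
    then have "curve_b c q1 q2 (param y) \<le> curve_b c q1 q2 (param x)"
      using param_pos by (intro strict_mono_on_leD[OF strict_mono_on_curve_b]) auto
    with \<open>x < y\<close> show False
      by (simp add: curve_b_param)
  qed
qed

lemma slope_eq:
  assumes "0 < w"
  shows "a_deriv w / b_deriv w = - (w powr (q1 - q2) *
    ((c * r1 * q2 + r2 * q1 * w powr (q1 + q2)) / (r1 * q2 * w powr (q1 + q2) + c * r2 * q1)))"
proof -
  let ?z = "w powr (q1 + q2)"
  have "w powr (q1 - 1) = w powr (- q2 - 1) * ?z" "w powr (q2 - 1) = w powr (- q1 - 1) * ?z"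
    by (simp_all add: powr_add[symmetric])
  then have "a_deriv w = - (w powr (- q2 - 1) * (c * r1 * q2 + r2 * q1 * ?z))"
    and "b_deriv w = w powr (- q1 - 1) * (r1 * q2 * ?z + c * r2 * q1)"
    by (simp_all add: a_deriv_def b_deriv_def algebra_simps)
  moreover have "w powr (- q2 - 1) / w powr (- q1 - 1) = w powr (q1 - q2)"
    by (simp add: powr_diff[symmetric])
  ultimately show ?thesis
    by (metis minus_divide_left times_divide_times_eq)
qed

lemma slope_mono:
  assumes "0 < s" "s \<le> t"
  shows "a_deriv s / b_deriv s \<le> a_deriv t / b_deriv t"
proof -
  let ?M = "\<lambda>z. (c * r1 * q2 + r2 * q1 * z) / (r1 * q2 * z + c * r2 * q1)"
  have "r2 * q1 \<le> r1 * q2"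
    using rho2_mult_ratio_le_rho1[OF q1_pos q1_less_q2 q2_le_1] q2_pos by (simp add: field_simps)
  then have "(r2 * q1) * (c * r2 * q1) \<le> (c * r1 * q2) * (r1 * q2)"
    using mult_mono[of "r2 * q1" "r1 * q2" "r2 * q1" "r1 * q2"] c_pos r1_pos r2_pos q1_pos q2_pos
    by (simp add: algebra_simps)
  moreover have "s powr (q1 + q2) \<le> t powr (q1 + q2)"
    using assms q1_pos q2_pos by (intro powr_mono2) auto
  ultimately have "?M (t powr (q1 + q2)) \<le> ?M (s powr (q1 + q2))"
    using r1_pos r2_pos c_pos q1_pos q2_pos by (intro linear_fractional_antimono) auto
  moreover have "t powr (q1 - q2) \<le> s powr (q1 - q2)"
    using assms q1_less_q2 by (intro powr_mono2') auto
  moreover have "0 \<le> ?M z" if "0 \<le> z" for z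
    using that r1_pos r2_pos c_pos q1_pos q2_pos by (intro divide_nonneg_nonneg add_nonneg_nonneg) auto
  ultimately have "t powr (q1 - q2) * ?M (t powr (q1 + q2)) \<le> s powr (q1 - q2) * ?M (s powr (q1 + q2))"
    by (intro mult_mono) auto
  then show ?thesis
    using assms by (simp add: slope_eq)
qed

lemma normalized_bound_hyps:
  "0 < q1 / q2" "q1 / q2 \<le> 1" "r2 * (q1 / q2) \<le> r1" "r2 * (1 - q1 / q2) \<le> r2\<^sup>2 - r1\<^sup>2"
  using q1_pos q1_less_q2 q2_le_1 rho2_mult_ratio_le_rho1 rho2_mult_ratio_compl_le by auto

lemma curve_a_le_of_curve_b_neg:
  assumes "0 < w" and b_neg: "curve_b c q1 q2 w < 0"
  shows "curve_a c q1 q2 w \<le> (- curve_b c q1 q2 w) powr (q2 / q1) * c powr (1 - q2 / q1)"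
proof -
  define e where "e = w powr (q1 + q2) / c"
  have "w powr q2 = w powr (- q1) * w powr (q1 + q2)" "w powr q1 = w powr (- q2) * w powr (q1 + q2)"
    by (simp_all add: powr_add[symmetric])
  then have b_eq: "- curve_b c q1 q2 w = w powr (- q1) * c * (r2 - r1 * e)"
    and a_eq: "curve_a c q1 q2 w = w powr (- q2) * c * (r1 - r2 * e)"
    unfolding e_def curve_a_def curve_b_def using c_pos by (simp_all add: field_simps)
  have "0 < w powr (- q1) * c * (r2 - r1 * e)"
    using b_neg b_eq by linarith
  moreover have "0 < w powr (- q1) * c"
    using c_pos \<open>0 < w\<close> by simp
  ultimately have "0 < r2 - r1 * e"
    using zero_less_mult_pos by blast
  then have "r1 - r2 * e \<le> (r2 - r1 * e) powr (q2 / q1)"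
    using normalized_bound_neg[OF r1_pos r2_pos normalized_bound_hyps] by simp
  then have "curve_a c q1 q2 w \<le> w powr (- q2) * c * (r2 - r1 * e) powr (q2 / q1)"
    unfolding a_eq using c_pos by (intro mult_left_mono) auto
  also have "\<dots> = (w powr (- q1)) powr (q2 / q1) * (c powr (q2 / q1) * c powr (1 - q2 / q1))
      * (r2 - r1 * e) powr (q2 / q1)"
    using c_pos q1_pos by (simp add: powr_powr flip: powr_add)
  also have "\<dots> = (- curve_b c q1 q2 w) powr (q2 / q1) * c powr (1 - q2 / q1)"
    using \<open>0 < r2 - r1 * e\<close> c_pos by (simp add: b_eq powr_mult)
  finally show ?thesis .
qed

lemma curve_a_le_of_curve_b_nonneg:
  assumes "0 < w" and b_nonneg: "0 \<le> curve_b c q1 q2 w"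
  shows "curve_a c q1 q2 w \<le> - (curve_b c q1 q2 w powr (q1 / q2))"
proof -
  define e where "e = c / w powr (q1 + q2)"
  have "w powr (- q1) = w powr q2 / w powr (q1 + q2)" "w powr (- q2) = w powr q1 / w powr (q1 + q2)"
    by (simp_all add: powr_diff[symmetric])
  then have b_eq: "curve_b c q1 q2 w = w powr q2 * (r1 - r2 * e)"
    and a_eq: "curve_a c q1 q2 w = - (w powr q1 * (r2 - r1 * e))"
    unfolding e_def curve_a_def curve_b_def using \<open>0 < w\<close> by (simp_all add: field_simps)
  have "0 \<le> r1 - r2 * e"
    using b_nonneg \<open>0 < w\<close> by (simp add: b_eq zero_le_mult_iff)
  then have "(r1 - r2 * e) powr (q1 / q2) \<le> r2 - r1 * e"
    using normalized_bound_nonneg[OF r1_pos r2_pos normalized_bound_hyps] by simp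
  then have "w powr q1 * (r1 - r2 * e) powr (q1 / q2) \<le> w powr q1 * (r2 - r1 * e)"
    by (intro mult_left_mono) auto
  moreover have "curve_b c q1 q2 w powr (q1 / q2) = w powr q1 * (r1 - r2 * e) powr (q1 / q2)"
    using \<open>0 \<le> r1 - r2 * e\<close> q2_pos by (simp add: b_eq powr_mult powr_powr)
  ultimately show ?thesis
    by (simp add: a_eq)
qed

definition a_star :: "real \<Rightarrow> real" where
  "a_star x = curve_a c q1 q2 (param x)"

lemma graph_a_star:
  "{(curve_b c q1 q2 \<omega>, curve_a c q1 q2 \<omega>) | \<omega>. \<omega> > 0} = {(x, a_star x) | x. True}"
proof (intro set_eqI iffI)
  fix p
  assume "p \<in> {(curve_b c q1 q2 \<omega>, curve_a c q1 q2 \<omega>) | \<omega>. \<omega> > 0}"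
  then show "p \<in> {(x, a_star x) | x. True}"
    by (auto simp: a_star_def param_curve_b)
next
  fix p
  assume "p \<in> {(x, a_star x) | x. True}"
  then obtain x where "p = (curve_b c q1 q2 (param x), curve_a c q1 q2 (param x))"
    by (auto simp: a_star_def curve_b_param)
  then show "p \<in> {(curve_b c q1 q2 \<omega>, curve_a c q1 q2 \<omega>) | \<omega>. \<omega> > 0}"
    using param_pos by blast
qed

lemma smooth_real_a_star: "smooth_real a_star"
proof -
  have "powr_rational (curve_a c q1 q2)"
    unfolding curve_a_def[abs_def] by (intro powr_rational_diff powr_rational.intros)
  moreover have "powr_rational b_deriv"
    unfolding b_deriv_def[abs_def] by (intro powr_rational.intros)
  ultimately show ?thesis
    unfolding a_star_def[abs_def] using param_pos param_has_real_derivative b_deriv_pos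
    by (intro smooth_real_comp_inverse[of param b_deriv]) (auto simp: less_imp_neq[symmetric])
qed

lemma a_star_strict_antimono: "x < y \<Longrightarrow> a_star y < a_star x"
  unfolding a_star_def using curve_a_strict_antimono param_pos strict_mono_param
  by (simp add: strict_monoD)

lemma convex_on_a_star: "convex_on UNIV a_star"
  unfolding a_star_def[abs_def]
  using param_pos param_has_real_derivative strict_mono_param curve_a_has_real_derivative slope_mono
  by (intro convex_on_comp_inverse) (auto intro: strict_mono_mono)

lemma bij_a_star: "bij a_star"
proof (rule bijI)
  show "inj a_star"
    by (rule injI) (metis a_star_strict_antimono less_irrefl linorder_cases)
  have "y \<in> range a_star" for y
  proof -
    obtain w where "0 < w" "y = curve_a c q1 q2 w"
      using curve_a_surj by (metis UNIV_I greaterThan_iff imageE)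
    then show ?thesis
      by (metis a_star_def param_curve_b rangeI)
  qed
  then show "surj a_star"
    by auto
qed

lemma a_star_le_neg: "b < 0 \<Longrightarrow> a_star b \<le> (- b) powr (q2 / q1) * c powr (1 - q2 / q1)"
  using curve_a_le_of_curve_b_neg[OF param_pos] by (simp add: a_star_def curve_b_param)

lemma a_star_le_nonneg: "0 \<le> b \<Longrightarrow> a_star b \<le> - (b powr (q1 / q2))"
  using curve_a_le_of_curve_b_nonneg[OF param_pos] by (simp add: a_star_def curve_b_param)

end

theorem lemma1:
  fixes c q1 q2 :: real
  assumes "c > 0" and "0 < q1" and "q1 < q2" and "q2 \<le> 1"
  shows "rho1 q1 q2 > 0 \<and> rho2 q1 q2 > 1 \<and>
    (\<exists>A :: real \<Rightarrow> real.
       {(curve_b c q1 q2 \<omega>, curve_a c q1 q2 \<omega>) | \<omega>. \<omega> > 0} = {(x, A x) | x. True}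
     \<and> smooth_real A
     \<and> (\<forall>x y. x < y \<longrightarrow> A y < A x)
     \<and> convex_on UNIV A
     \<and> bij A
     \<and> (\<forall>b. b < 0 \<longrightarrow> A b \<le> (- b) powr (q2 / q1) * c powr (1 - q2 / q1))
     \<and> (\<forall>b. b \<ge> 0 \<longrightarrow> A b \<le> - (b powr (q1 / q2))))"
proof -
  interpret gamma_curve c q1 q2
    using assms by unfold_locales
  show ?thesis
    using rho1_pos rho2_gt_one assms graph_a_star smooth_real_a_star a_star_strict_antimono
      convex_on_a_star bij_a_star a_star_le_neg a_star_le_nonneg
    by blast
qed

end
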